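(* In the altruistic controlled social learning model described in the context, $V^*_A(b)\le0$ for all $b\in[0,1]$, $V^*_A(b)=V^*_A(1-b)$ for all $b\in[0,1]$, and $V^*_A(0)=V^*_A(1)=0$, with $\pi^*_A(0)=\pi^*_A(1)=p$.
   Context: A binary state $\omega\in\{G,B\}$ is drawn once. Agents $i=1,2,\dots$ act in sequence; a planner chooses precision $q_i\in[0.5,1]$ and agent $i$ receives a private signal $s_i$ with $\mathbb{P}(s_i=\omega)=q_i$, conditionally independent given $\omega$. Let $y(b,q)=1+2bq-b-q$, $z(b,q)=b+q-2bq$. With public belief $b_i$, agent $i$ takes $a_i=s_i$ if $1-q_i\le b_i\le q_i$, $G$ if $b_i>q_i$, $B$ if $b_i<1-q_i$; the public belief becomes $\frac{q_ib_i}{y(b_i,q_i)}$ (if $s_i=G$) or $\frac{(1-q_i)b_i}{z(b_i,q_i)}$ (if $s_i=B$) when $1-q_i\le b_i\le q_i$, and stays $b_i$ otherwise. With $C>0$, baseline $p\in[0.5,1)$ and cost $\beta:[0.5,1]\to[0,\infty)$ non-negative, increasing, continuous, concave with $\beta(p)=0$, the altruistic reward is $r_A(b,q)=-\beta(q)-C\min(b,1-b,1-q)$. Policies are deterministic Markov maps $\pi:[0,1]\to[0.5,1]$; for $\delta\in[0,1)$, $V^\pi_A(b)=\mathbb{E}[\sum_{i\ge1}\delta^{i-1}r_A(b_i,\pi(b_i))\mid b_1=b]$, $V^*_A=\sup_\pi V^\pi_A$, and $\pi^*_A$ is an optimal policy. *)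

theory Defs
  imports "HOL-Analysis.Analysis"
begin

definition yy :: "real \<Rightarrow> real \<Rightarrow> real" where
  "yy b q = 1 + 2*b*q - b - q"

definition zz :: "real \<Rightarrow> real \<Rightarrow> real" where
  "zz b q = b + q - 2*b*q"

definition rA :: "(real \<Rightarrow> real) \<Rightarrow> real \<Rightarrow> real \<Rightarrow> real \<Rightarrow> real" where
  "rA \<beta> C b q = - \<beta> q - C * min b (min (1 - b) (1 - q))"

(* The public belief is a Markov chain: if 1-q \<le> b \<le> q, it moves to q b / y(b,q)
   with probability y(b,q) = P(s = G | belief b) and to (1-q) b / z(b,q) with
   probability z(b,q); otherwise it stays at b. *)
fun VAn :: "(real \<Rightarrow> real) \<Rightarrow> real \<Rightarrow> real \<Rightarrow> (real \<Rightarrow> real) \<Rightarrow> nat \<Rightarrow> real \<Rightarrow> real" where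
  "VAn \<beta> C \<delta> \<pi> 0 b = 0"
| "VAn \<beta> C \<delta> \<pi> (Suc n) b =
     (let q = \<pi> b in
      rA \<beta> C b q + \<delta> *
        (if 1 - q \<le> b \<and> b \<le> q
         then yy b q * VAn \<beta> C \<delta> \<pi> n (q * b / yy b q)
            + zz b q * VAn \<beta> C \<delta> \<pi> n ((1 - q) * b / zz b q)
         else VAn \<beta> C \<delta> \<pi> n b))"

definition VA :: "(real \<Rightarrow> real) \<Rightarrow> real \<Rightarrow> real \<Rightarrow> (real \<Rightarrow> real) \<Rightarrow> real \<Rightarrow> real" where
  "VA \<beta> C \<delta> \<pi> b = lim (\<lambda>n. VAn \<beta> C \<delta> \<pi> n b)"

definition policy :: "(real \<Rightarrow> real) \<Rightarrow> bool" where
  "policy \<pi> \<longleftrightarrow> (\<forall>b\<in>{0..1}. \<pi> b \<in> {1/2..1})"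

definition VAstar :: "(real \<Rightarrow> real) \<Rightarrow> real \<Rightarrow> real \<Rightarrow> real \<Rightarrow> real" where
  "VAstar \<beta> C \<delta> b = (SUP \<pi>\<in>{\<pi>. policy \<pi>}. VA \<beta> C \<delta> \<pi> b)"

definition optimal :: "(real \<Rightarrow> real) \<Rightarrow> real \<Rightarrow> real \<Rightarrow> (real \<Rightarrow> real) \<Rightarrow> bool" where
  "optimal \<beta> C \<delta> \<pi> \<longleftrightarrow> policy \<pi> \<and> (\<forall>b\<in>{0..1}. VA \<beta> C \<delta> \<pi> b = VAstar \<beta> C \<delta> b)"

end

theory Submission
  imports Defs
begin

(* All one-step rewards are non-positive, hence so is every value. At the beliefs 0 and 1
   the baseline precision p < 1 costs nothing and lies outside the informative band
   [1 - q, q], so the belief is stuck there with reward 0 forever and the value 0 is attained.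
   The reflection b to 1 - b swaps the two signals and preserves the reward, so reflecting a
   policy reflects its value function, which makes V*_A symmetric. Finally, redefining an
   optimal policy to be p at 0 and 1 keeps its value function: the old value function is a
   bounded fixed point of the Bellman operator of the new policy, a delta-contraction on
   bounded functions on [0,1], whose bounded fixed point is unique. *)

definition expect_next :: "(real \<Rightarrow> real) \<Rightarrow> real \<Rightarrow> real \<Rightarrow> real" where
  "expect_next V b q =
     (if 1 - q \<le> b \<and> b \<le> q
      then yy b q * V (q * b / yy b q) + zz b q * V ((1 - q) * b / zz b q)
      else V b)"

definition bellman_op ::
  "(real \<Rightarrow> real) \<Rightarrow> real \<Rightarrow> real \<Rightarrow> (real \<Rightarrow> real) \<Rightarrow> (real \<Rightarrow> real) \<Rightarrow> real \<Rightarrow> real" where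
  "bellman_op \<beta> C \<delta> \<pi> V b = rA \<beta> C b (\<pi> b) + \<delta> * expect_next V b (\<pi> b)"

lemma VAn_0: "VAn \<beta> C \<delta> \<pi> 0 = (\<lambda>_. 0)"
  by auto

lemma VAn_Suc: "VAn \<beta> C \<delta> \<pi> (Suc n) = bellman_op \<beta> C \<delta> \<pi> (VAn \<beta> C \<delta> \<pi> n)"
  by (auto simp: bellman_op_def expect_next_def Let_def)

lemma yy_eq: "yy b q = b * q + (1 - b) * (1 - q)"
  unfolding yy_def by algebra

lemma zz_eq: "zz b q = b * (1 - q) + (1 - b) * q"
  unfolding zz_def by algebra

lemma yy_plus_zz: "yy b q + zz b q = 1"
  unfolding yy_def zz_def by simp

lemma yy_nonneg: "b \<in> {0..1} \<Longrightarrow> q \<in> {0..1} \<Longrightarrow> 0 \<le> yy b q"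
  unfolding yy_eq by simp

lemma zz_nonneg: "b \<in> {0..1} \<Longrightarrow> q \<in> {0..1} \<Longrightarrow> 0 \<le> zz b q"
  unfolding zz_eq by simp

lemma posterior_G_in_unit:
  assumes "b \<in> {0..1}" "q \<in> {0..1}"
  shows "q * b / yy b q \<in> {0..1}"
proof (cases "yy b q = 0")
  case False
  then have "0 < yy b q" using yy_nonneg[OF assms] by simp
  moreover have "q * b \<le> yy b q" using assms by (simp add: yy_eq mult.commute)
  ultimately show ?thesis using assms by simp
qed simp

lemma posterior_B_in_unit:
  assumes "b \<in> {0..1}" "q \<in> {0..1}"
  shows "(1 - q) * b / zz b q \<in> {0..1}"
proof (cases "zz b q = 0")
  case False
  then have "0 < zz b q" using zz_nonneg[OF assms] by simp
  moreover have "(1 - q) * b \<le> zz b q" using assms by (simp add: zz_eq mult.commute)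
  ultimately show ?thesis using assms by simp
qed simp

lemma expect_next_const: "expect_next (\<lambda>_. c) b q = c"
  using yy_plus_zz[of b q] by (simp add: expect_next_def distrib_right[symmetric])

lemma expect_next_diff:
  "expect_next f b q - expect_next g b q = expect_next (\<lambda>x. f x - g x) b q"
  by (simp add: expect_next_def algebra_simps)

lemma expect_next_mono:
  assumes "b \<in> {0..1}" "q \<in> {0..1}" and "\<forall>x\<in>{0..1}. f x \<le> g x"
  shows "expect_next f b q \<le> expect_next g b q"
  using assms yy_nonneg zz_nonneg posterior_G_in_unit posterior_B_in_unit
  by (auto simp: expect_next_def intro!: add_mono mult_left_mono)

lemma expect_next_abs_le:
  assumes "b \<in> {0..1}" "q \<in> {0..1}" and "\<forall>x\<in>{0..1}. \<bar>f x\<bar> \<le> K"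
  shows "\<bar>expect_next f b q\<bar> \<le> K"
proof -
  have "- K \<le> expect_next f b q"
    using expect_next_mono[of b q "\<lambda>_. - K" f] assms by (force simp: expect_next_const)
  moreover have "expect_next f b q \<le> K"
    using expect_next_mono[of b q f "\<lambda>_. K"] assms by (force simp: expect_next_const)
  ultimately show ?thesis by linarith
qed

lemma expect_next_tendsto:
  assumes "b \<in> {0..1}" "q \<in> {0..1}" and "\<forall>x\<in>{0..1}. (\<lambda>n. f n x) \<longlonglongrightarrow> g x"
  shows "(\<lambda>n. expect_next (f n) b q) \<longlonglongrightarrow> expect_next g b q"
  using assms posterior_G_in_unit posterior_B_in_unit
  by (auto simp: expect_next_def intro!: tendsto_intros)

lemma expect_next_reflect:
  "expect_next f (1 - b) q = expect_next (\<lambda>x. f (1 - x)) b q"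
proof -
  have "yy (1 - b) q = zz b q" "zz (1 - b) q = yy b q"
    unfolding yy_def zz_def by algebra+
  moreover have "zz b q * f (q * (1 - b) / zz b q) = zz b q * f (1 - (1 - q) * b / zz b q)"
    by (cases "zz b q = 0") (auto simp: zz_def field_simps)
  moreover have "yy b q * f ((1 - q) * (1 - b) / yy b q) = yy b q * f (1 - q * b / yy b q)"
    by (cases "yy b q = 0") (auto simp: yy_def field_simps)
  ultimately show ?thesis
    unfolding expect_next_def by (auto simp: add.commute)
qed

lemma policy_in_unit:
  assumes "policy \<pi>" "b \<in> {0..1}"
  shows "\<pi> b \<in> {0..1}"
proof -
  have "\<pi> b \<in> {1/2..1}" using assms unfolding policy_def by blast
  then show ?thesis by simp
qed

lemma bellman_op_dist:
  assumes "0 \<le> \<delta>" "b \<in> {0..1}" "\<pi> b \<in> {0..1}" and "\<forall>x\<in>{0..1}. \<bar>f x - g x\<bar> \<le> K"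
  shows "\<bar>bellman_op \<beta> C \<delta> \<pi> f b - bellman_op \<beta> C \<delta> \<pi> g b\<bar> \<le> \<delta> * K"
proof -
  have "bellman_op \<beta> C \<delta> \<pi> f b - bellman_op \<beta> C \<delta> \<pi> g b
      = \<delta> * expect_next (\<lambda>x. f x - g x) b (\<pi> b)"
    by (simp add: bellman_op_def expect_next_diff[symmetric] algebra_simps)
  with assms expect_next_abs_le[of b "\<pi> b" "\<lambda>x. f x - g x" K] show ?thesis
    by (simp add: abs_mult mult_left_mono)
qed

lemma bellman_fixpoint_unique:
  assumes \<delta>: "0 \<le> \<delta>" "\<delta> < 1" and "policy \<pi>"
    and fixV: "\<forall>x\<in>{0..1}. V x = bellman_op \<beta> C \<delta> \<pi> V x"
    and fixW: "\<forall>x\<in>{0..1}. W x = bellman_op \<beta> C \<delta> \<pi> W x"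
    and bounded: "\<forall>x\<in>{0..1}. \<bar>V x - W x\<bar> \<le> K"
    and x: "x \<in> {0..1}"
  shows "V x = W x"
proof -
  have contract: "\<forall>x\<in>{0..1}. \<bar>V x - W x\<bar> \<le> \<delta> ^ n * K" for n
  proof (induction n)
    case (Suc n)
    show ?case
    proof
      fix x :: real assume "x \<in> {0..1}"
      then have "\<bar>V x - W x\<bar>
          = \<bar>bellman_op \<beta> C \<delta> \<pi> V x - bellman_op \<beta> C \<delta> \<pi> W x\<bar>"
        using fixV fixW by metis
      also have "\<dots> \<le> \<delta> * (\<delta> ^ n * K)"
        using \<delta>(1) \<open>x \<in> {0..1}\<close> policy_in_unit[OF \<open>policy \<pi>\<close>] Suc
        by (intro bellman_op_dist) auto
      finally show "\<bar>V x - W x\<bar> \<le> \<delta> ^ Suc n * K" by (simp add: mult.assoc)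
    qed
  qed (use bounded in simp)
  have "(\<lambda>n. \<delta> ^ n * K) \<longlonglongrightarrow> 0"
    using \<delta> by (intro tendsto_mult_left_zero LIMSEQ_power_zero) auto
  then have "\<bar>V x - W x\<bar> \<le> 0"
    using contract x by (intro LIMSEQ_le_const) auto
  then show ?thesis by simp
qed

lemma VAn_reflect: "VAn \<beta> C \<delta> (\<lambda>x. \<pi> (1 - x)) n (1 - b) = VAn \<beta> C \<delta> \<pi> n b"
proof (induction n arbitrary: b)
  case (Suc n)
  have "rA \<beta> C (1 - b) q = rA \<beta> C b q" for q
    unfolding rA_def by (simp add: min_def)
  then show ?case
    by (simp add: VAn_Suc bellman_op_def expect_next_reflect Suc.IH)
qed simp

lemma VA_reflect: "VA \<beta> C \<delta> (\<lambda>x. \<pi> (1 - x)) (1 - b) = VA \<beta> C \<delta> \<pi> b"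
  unfolding VA_def VAn_reflect ..

lemma policy_reflect: "policy \<pi> \<Longrightarrow> policy (\<lambda>x. \<pi> (1 - x))"
  unfolding policy_def by auto

lemma VAstar_reflect: "VAstar \<beta> C \<delta> (1 - b) = VAstar \<beta> C \<delta> b"
proof -
  define reflect :: "(real \<Rightarrow> real) \<Rightarrow> real \<Rightarrow> real" where "reflect \<pi> = (\<lambda>x. \<pi> (1 - x))" for \<pi>
  define P where "P = {\<pi>. policy \<pi>}"
  have "reflect ` P = P"
  proof (intro equalityI subsetI)
    fix \<pi> assume "\<pi> \<in> P"
    then have "\<pi> = reflect (reflect \<pi>)" "reflect \<pi> \<in> P"
      by (simp_all add: reflect_def P_def policy_reflect)
    then show "\<pi> \<in> reflect ` P" by (rule image_eqI)
  qed (auto simp: reflect_def P_def policy_reflect)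
  then have "VAstar \<beta> C \<delta> (1 - b) = (SUP \<pi>\<in>reflect ` P. VA \<beta> C \<delta> \<pi> (1 - b))"
    unfolding VAstar_def P_def by simp
  also have "\<dots> = (SUP \<pi>\<in>P. VA \<beta> C \<delta> (reflect \<pi>) (1 - b))"
    by (simp only: image_image)
  finally show ?thesis
    unfolding reflect_def VA_reflect VAstar_def P_def .
qed

lemma VAn_eq_0_if_stuck:
  assumes stuck: "\<not> (1 - \<pi> b \<le> b \<and> b \<le> \<pi> b)" and "rA \<beta> C b (\<pi> b) = 0"
  shows "VAn \<beta> C \<delta> \<pi> n b = 0"
proof (induction n)
  case (Suc n)
  have "VAn \<beta> C \<delta> \<pi> (Suc n) b = rA \<beta> C b (\<pi> b) + \<delta> * VAn \<beta> C \<delta> \<pi> n b"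
    by (simp only: VAn.simps Let_def if_not_P[OF stuck])
  with Suc.IH assms(2) show ?case by simp
qed simp

lemma VA_eq_0_if_stuck:
  assumes "\<not> (1 - \<pi> b \<le> b \<and> b \<le> \<pi> b)" and "rA \<beta> C b (\<pi> b) = 0"
  shows "VA \<beta> C \<delta> \<pi> b = 0"
proof -
  have "VAn \<beta> C \<delta> \<pi> n b = 0" for n
    using assms by (rule VAn_eq_0_if_stuck)
  then show ?thesis unfolding VA_def by (simp add: limI)
qed

locale altruistic_model =
  fixes \<beta> :: "real \<Rightarrow> real" and C \<delta> :: real
  assumes cost_nonneg: "\<forall>q\<in>{1/2..1}. 0 \<le> \<beta> q"
    and cost_mono: "mono_on {1/2..1} \<beta>"
    and C_nonneg: "0 \<le> C"
    and discount_nonneg: "0 \<le> \<delta>" and discount_less_1: "\<delta> < 1"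
begin

lemma rA_nonpos:
  assumes "b \<in> {0..1}" "q \<in> {1/2..1}"
  shows "rA \<beta> C b q \<le> 0"
proof -
  have "0 \<le> \<beta> q" using cost_nonneg assms by blast
  moreover have "0 \<le> C * min b (min (1 - b) (1 - q))"
    using assms C_nonneg by simp
  ultimately show ?thesis unfolding rA_def by linarith
qed

lemma rA_lower_bound:
  assumes "b \<in> {0..1}" "q \<in> {1/2..1}"
  shows "- (\<beta> 1 + C) \<le> rA \<beta> C b q"
proof -
  have "\<beta> q \<le> \<beta> 1" using cost_mono assms by (auto intro: mono_onD)
  moreover have "C * min b (min (1 - b) (1 - q)) \<le> C * 1"
    using assms C_nonneg by (intro mult_left_mono) auto
  ultimately show ?thesis unfolding rA_def by linarith
qed

lemma bellman_op_nonpos: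
  assumes "policy \<pi>" "b \<in> {0..1}" and "\<forall>x\<in>{0..1}. V x \<le> 0"
  shows "bellman_op \<beta> C \<delta> \<pi> V b \<le> 0"
proof -
  have "expect_next V b (\<pi> b) \<le> expect_next (\<lambda>_. 0) b (\<pi> b)"
    using assms policy_in_unit by (intro expect_next_mono) auto
  moreover have "rA \<beta> C b (\<pi> b) \<le> 0"
    using assms by (auto simp: policy_def intro!: rA_nonpos)
  ultimately show ?thesis
    unfolding bellman_op_def expect_next_const
    using discount_nonneg by (simp add: add_nonpos_nonpos mult_nonneg_nonpos)
qed

lemma bellman_op_abs_le:
  assumes "policy \<pi>" "b \<in> {0..1}" and "\<forall>x\<in>{0..1}. \<bar>V x\<bar> \<le> K"
  shows "\<bar>bellman_op \<beta> C \<delta> \<pi> V b\<bar> \<le> \<beta> 1 + C + \<delta> * K"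
proof -
  have "\<bar>bellman_op \<beta> C \<delta> \<pi> V b - bellman_op \<beta> C \<delta> \<pi> (\<lambda>_. 0) b\<bar> \<le> \<delta> * K"
    using assms discount_nonneg policy_in_unit by (intro bellman_op_dist) auto
  moreover have "\<bar>bellman_op \<beta> C \<delta> \<pi> (\<lambda>_. 0) b\<bar> \<le> \<beta> 1 + C"
  proof -
    have "\<pi> b \<in> {1/2..1}" using assms unfolding policy_def by blast
    then show ?thesis
      using assms rA_nonpos[of b "\<pi> b"] rA_lower_bound[of b "\<pi> b"]
      by (simp add: bellman_op_def expect_next_const)
  qed
  ultimately show ?thesis by linarith
qed

lemma VAn_Suc_diff_le:
  assumes "policy \<pi>"
  shows "\<forall>b\<in>{0..1}. \<bar>VAn \<beta> C \<delta> \<pi> (Suc n) b - VAn \<beta> C \<delta> \<pi> n b\<bar> \<le> \<delta> ^ n * (\<beta> 1 + C)"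
proof (induction n)
  case 0
  show ?case
    using bellman_op_abs_le[OF assms, of _ "\<lambda>_. 0" 0] by (simp add: VAn_Suc VAn_0)
next
  case (Suc n)
  show ?case
  proof
    fix b :: real assume "b \<in> {0..1}"
    then have "\<bar>bellman_op \<beta> C \<delta> \<pi> (VAn \<beta> C \<delta> \<pi> (Suc n)) b
        - bellman_op \<beta> C \<delta> \<pi> (VAn \<beta> C \<delta> \<pi> n) b\<bar> \<le> \<delta> * (\<delta> ^ n * (\<beta> 1 + C))"
      using discount_nonneg policy_in_unit[OF assms] Suc by (intro bellman_op_dist) auto
    then show "\<bar>VAn \<beta> C \<delta> \<pi> (Suc (Suc n)) b - VAn \<beta> C \<delta> \<pi> (Suc n) b\<bar>
        \<le> \<delta> ^ Suc n * (\<beta> 1 + C)"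
      by (simp only: VAn_Suc[of _ _ _ _ "Suc n"] VAn_Suc[of _ _ _ _ n] power_Suc mult.assoc)
  qed
qed

lemma VAn_converges:
  assumes "policy \<pi>" "b \<in> {0..1}"
  shows "(\<lambda>n. VAn \<beta> C \<delta> \<pi> n b) \<longlonglongrightarrow> VA \<beta> C \<delta> \<pi> b"
proof -
  define d where "d k = VAn \<beta> C \<delta> \<pi> (Suc k) b - VAn \<beta> C \<delta> \<pi> k b" for k
  have "summable (\<lambda>k. \<delta> ^ k * (\<beta> 1 + C))"
    using discount_nonneg discount_less_1 by (intro summable_mult2 summable_geometric) simp
  moreover have "norm (d k) \<le> \<delta> ^ k * (\<beta> 1 + C)" for k
    using VAn_Suc_diff_le[OF assms(1)] assms(2) unfolding d_def by simp
  ultimately have "(\<lambda>n. \<Sum>k<n. d k) \<longlonglongrightarrow> suminf d"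
    by (intro summable_LIMSEQ summable_comparison_test[of d]) auto
  moreover have "(\<Sum>k<n. d k) = VAn \<beta> C \<delta> \<pi> n b" for n
    unfolding d_def sum_lessThan_telescope[of "\<lambda>k. VAn \<beta> C \<delta> \<pi> k b"] by simp
  ultimately show ?thesis
    unfolding VA_def by (simp add: limI)
qed

lemma VA_bellman:
  assumes "policy \<pi>" "b \<in> {0..1}"
  shows "VA \<beta> C \<delta> \<pi> b = bellman_op \<beta> C \<delta> \<pi> (VA \<beta> C \<delta> \<pi>) b"
proof (rule LIMSEQ_unique)
  show "(\<lambda>n. VAn \<beta> C \<delta> \<pi> (Suc n) b) \<longlonglongrightarrow> VA \<beta> C \<delta> \<pi> b"
    using VAn_converges[OF assms] by (rule LIMSEQ_Suc)
  have "(\<lambda>n. expect_next (VAn \<beta> C \<delta> \<pi> n) b (\<pi> b))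
      \<longlonglongrightarrow> expect_next (VA \<beta> C \<delta> \<pi>) b (\<pi> b)"
    using assms VAn_converges[OF assms(1)] policy_in_unit by (intro expect_next_tendsto) auto
  then show "(\<lambda>n. VAn \<beta> C \<delta> \<pi> (Suc n) b)
      \<longlonglongrightarrow> bellman_op \<beta> C \<delta> \<pi> (VA \<beta> C \<delta> \<pi>) b"
    unfolding VAn_Suc bellman_op_def by (intro tendsto_intros)
qed

lemma VAn_nonpos:
  assumes "policy \<pi>"
  shows "\<forall>b\<in>{0..1}. VAn \<beta> C \<delta> \<pi> n b \<le> 0"
  by (induction n) (simp_all add: VAn_Suc bellman_op_nonpos[OF assms])

lemma VA_nonpos:
  assumes "policy \<pi>" "b \<in> {0..1}"
  shows "VA \<beta> C \<delta> \<pi> b \<le> 0"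
  using VAn_converges[OF assms] VAn_nonpos[OF assms(1)] assms(2)
  by (intro LIMSEQ_le_const2) auto

lemma VAn_abs_le:
  assumes "policy \<pi>"
  shows "\<forall>b\<in>{0..1}. \<bar>VAn \<beta> C \<delta> \<pi> n b\<bar> \<le> (\<beta> 1 + C) / (1 - \<delta>)"
proof (induction n)
  case 0
  have "0 \<le> \<beta> 1" using cost_nonneg by simp
  then show ?case using C_nonneg discount_less_1 by simp
next
  case (Suc n)
  have "\<beta> 1 + C + \<delta> * ((\<beta> 1 + C) / (1 - \<delta>)) = (\<beta> 1 + C) / (1 - \<delta>)"
    using discount_less_1 by (simp add: field_simps)
  then show ?case
    using bellman_op_abs_le[OF assms _ Suc] by (simp add: VAn_Suc)
qed

lemma VA_abs_le:
  assumes "policy \<pi>" "b \<in> {0..1}"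
  shows "\<bar>VA \<beta> C \<delta> \<pi> b\<bar> \<le> (\<beta> 1 + C) / (1 - \<delta>)"
  using tendsto_rabs[OF VAn_converges[OF assms]] VAn_abs_le[OF assms(1)] assms(2)
  by (intro LIMSEQ_le_const2) auto

lemma bounded_fixpoint_eq_VA:
  assumes "policy \<pi>" and fixpoint: "\<forall>x\<in>{0..1}. W x = bellman_op \<beta> C \<delta> \<pi> W x"
    and bounded: "\<forall>x\<in>{0..1}. \<bar>W x\<bar> \<le> K" and "b \<in> {0..1}"
  shows "W b = VA \<beta> C \<delta> \<pi> b"
proof (rule bellman_fixpoint_unique[OF discount_nonneg discount_less_1 assms(1) fixpoint])
  show "\<forall>x\<in>{0..1}. VA \<beta> C \<delta> \<pi> x = bellman_op \<beta> C \<delta> \<pi> (VA \<beta> C \<delta> \<pi>) x"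
    using VA_bellman[OF assms(1)] by blast
  show "\<forall>x\<in>{0..1}. \<bar>W x - VA \<beta> C \<delta> \<pi> x\<bar> \<le> K + (\<beta> 1 + C) / (1 - \<delta>)"
  proof
    fix x :: real assume "x \<in> {0..1}"
    then show "\<bar>W x - VA \<beta> C \<delta> \<pi> x\<bar> \<le> K + (\<beta> 1 + C) / (1 - \<delta>)"
      using bounded VA_abs_le[OF assms(1)] abs_triangle_ineq4[of "W x" "VA \<beta> C \<delta> \<pi> x"]
      by fastforce
  qed
qed (rule \<open>b \<in> {0..1}\<close>)

lemma VA_le_VAstar:
  assumes "policy \<pi>" "b \<in> {0..1}"
  shows "VA \<beta> C \<delta> \<pi> b \<le> VAstar \<beta> C \<delta> b"
  unfolding VAstar_def using assms VA_nonpos by (intro cSUP_upper bdd_aboveI[of _ 0]) auto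

lemma VAstar_nonpos:
  assumes "b \<in> {0..1}"
  shows "VAstar \<beta> C \<delta> b \<le> 0"
proof -
  have "policy (\<lambda>_. 1)" unfolding policy_def by simp
  then show ?thesis
    unfolding VAstar_def using assms VA_nonpos by (intro cSUP_least) auto
qed

lemma VA_fun_upd_stuck:
  assumes "policy \<pi>" "q \<in> {1/2..1}" and "VA \<beta> C \<delta> \<pi> b = 0"
    and stuck: "\<not> (1 - q \<le> b \<and> b \<le> q)" and "rA \<beta> C b q = 0" and "x \<in> {0..1}"
  shows "VA \<beta> C \<delta> (\<pi>(b := q)) x = VA \<beta> C \<delta> \<pi> x"
proof -
  have policy_upd: "policy (\<pi>(b := q))" using assms(1,2) unfolding policy_def by simp
  have bounded: "\<forall>y\<in>{0..1}. \<bar>VA \<beta> C \<delta> \<pi> y\<bar> \<le> (\<beta> 1 + C) / (1 - \<delta>)"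
    using VA_abs_le[OF assms(1)] by blast
  have fixpoint: "\<forall>y\<in>{0..1}. VA \<beta> C \<delta> \<pi> y = bellman_op \<beta> C \<delta> (\<pi>(b := q)) (VA \<beta> C \<delta> \<pi>) y"
  proof
    fix y :: real assume y: "y \<in> {0..1}"
    show "VA \<beta> C \<delta> \<pi> y = bellman_op \<beta> C \<delta> (\<pi>(b := q)) (VA \<beta> C \<delta> \<pi>) y"
    proof (cases "y = b")
      case True
      have "bellman_op \<beta> C \<delta> (\<pi>(b := q)) (VA \<beta> C \<delta> \<pi>) b = rA \<beta> C b q + \<delta> * VA \<beta> C \<delta> \<pi> b"
        by (simp only: bellman_op_def expect_next_def fun_upd_same if_not_P[OF stuck])
      with True assms(3,5) show ?thesis by simp
    next
      case False
      then have "bellman_op \<beta> C \<delta> (\<pi>(b := q)) (VA \<beta> C \<delta> \<pi>) y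
          = bellman_op \<beta> C \<delta> \<pi> (VA \<beta> C \<delta> \<pi>) y"
        by (simp add: bellman_op_def)
      with VA_bellman[OF assms(1) y] show ?thesis by linarith
    qed
  qed
  show ?thesis
    using bounded_fixpoint_eq_VA[OF policy_upd fixpoint bounded \<open>x \<in> {0..1}\<close>] by (rule sym)
qed

lemma VAstar_eq_0_if_stuck:
  assumes "q \<in> {1/2..1}" "b \<in> {0..1}"
    and "\<not> (1 - q \<le> b \<and> b \<le> q)" "rA \<beta> C b q = 0"
  shows "VAstar \<beta> C \<delta> b = 0"
proof -
  have "policy (\<lambda>_. q)" using assms(1) unfolding policy_def by simp
  moreover have "VA \<beta> C \<delta> (\<lambda>_. q) b = 0"
    using assms(3,4) by (rule VA_eq_0_if_stuck)
  ultimately show ?thesis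
    using VA_le_VAstar[of "\<lambda>_. q" b] VAstar_nonpos[of b] assms(2) by fastforce
qed

lemma optimal_fun_upd_stuck:
  assumes opt: "optimal \<beta> C \<delta> \<pi>" and q: "q \<in> {1/2..1}" and b: "b \<in> {0..1}"
    and stuck: "\<not> (1 - q \<le> b \<and> b \<le> q)" "rA \<beta> C b q = 0"
  shows "optimal \<beta> C \<delta> (\<pi>(b := q))"
proof -
  have "policy \<pi>" using opt unfolding optimal_def by blast
  moreover have "VA \<beta> C \<delta> \<pi> b = 0"
    using opt b VAstar_eq_0_if_stuck[OF q b stuck] unfolding optimal_def by simp
  ultimately have "VA \<beta> C \<delta> (\<pi>(b := q)) x = VA \<beta> C \<delta> \<pi> x" if "x \<in> {0..1}" for x
    using VA_fun_upd_stuck[OF _ q _ stuck that] by blast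
  moreover have "policy (\<pi>(b := q))" using \<open>policy \<pi>\<close> q unfolding policy_def by simp
  ultimately show ?thesis using opt unfolding optimal_def by simp
qed

end

theorem lemma8:
  fixes \<beta> :: "real \<Rightarrow> real" and C p \<delta> :: real
  assumes "C > 0" and "1/2 \<le> p" and "p < 1"
    and "\<forall>q\<in>{1/2..1}. \<beta> q \<ge> 0"
    and "mono_on {1/2..1} \<beta>"
    and "continuous_on {1/2..1} \<beta>"
    and "concave_on {1/2..1} \<beta>"
    and "\<beta> p = 0"
    and "0 \<le> \<delta>" and "\<delta> < 1"
    and "\<exists>\<pi>. optimal \<beta> C \<delta> \<pi>"
  shows "(\<forall>b\<in>{0..1}. VAstar \<beta> C \<delta> b \<le> 0)
       \<and> (\<forall>b\<in>{0..1}. VAstar \<beta> C \<delta> b = VAstar \<beta> C \<delta> (1 - b))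
       \<and> VAstar \<beta> C \<delta> 0 = 0 \<and> VAstar \<beta> C \<delta> 1 = 0
       \<and> (\<exists>\<pi>. optimal \<beta> C \<delta> \<pi> \<and> \<pi> 0 = p \<and> \<pi> 1 = p)"
proof -
  interpret altruistic_model \<beta> C \<delta>
    using assms by unfold_locales auto
  have p: "p \<in> {1/2..1}" using assms(2,3) by simp
  have stuck_at_p: "\<not> (1 - p \<le> b \<and> b \<le> p)" "rA \<beta> C b p = 0" if "b = 0 \<or> b = 1" for b
    using that assms(2,3,8) by (auto simp: rA_def)
  have VAstar_endpoints: "VAstar \<beta> C \<delta> 0 = 0" "VAstar \<beta> C \<delta> 1 = 0"
    using VAstar_eq_0_if_stuck[OF p] stuck_at_p by simp_all
  obtain \<pi> where "optimal \<beta> C \<delta> \<pi>" using assms(11) by blast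
  then have "optimal \<beta> C \<delta> (\<pi>(0 := p, 1 := p))"
    using optimal_fun_upd_stuck[OF _ p] stuck_at_p by simp
  then show ?thesis
    using VAstar_nonpos VAstar_reflect VAstar_endpoints by fastforce
qed

end
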